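(* Let $g:\mathds{R}^d\setminus\{0\}\to[0,\infty)$ be continuous. Then the set $\mathcal{C}_c(\mathds{R}^d,\mathcal{M}^+(\mathds{R}^d\setminus\{0\}))\cap K^g(\mathds{R}^d,\mathcal{M}^+(\mathds{R}^d\setminus\{0\}))$ is bp-dense in $K^g(\mathds{R}^d,\mathcal{M}^+(\mathds{R}^d\setminus\{0\}))$, i.e. the smallest subset of $K^g$ containing it and closed under bp-limits of sequences is all of $K^g$.
   Context: $\mathcal{M}^+(\mathds{R}^d\setminus\{0\})$ is the set of positive locally finite (Radon) measures on $\mathds{R}^d\setminus\{0\}$ with the vague topology (induced by $\mathcal{C}_c(\mathds{R}^d\setminus\{0\})$). $K^g(\mathds{R}^d,\mathcal{M}^+(\mathds{R}^d\setminus\{0\}))$ is the set of measurable maps $\mu:\mathds{R}^d\to\mathcal{M}^+(\mathds{R}^d\setminus\{0\})$ (equivalently $x\mapsto\int f\,d\mu(x)$ measurable for all $f\in\mathcal{C}_c(\mathds{R}^d\setminus\{0\})$) such that $\|\mu\|_g:=\sup_x\int g(y)\mu(x,dy)<\infty$ and $\lim_{R\to\infty}\sup_{x\in K}\mu(x,\{|y|>R\})=0$ for every compact $K\subset\mathds{R}^d$. $\mathcal{C}_c(\mathds{R}^d,\mathcal{M}^+)$ denotes vaguely continuous maps vanishing (i.e. equal to the zero measure) outside a compact set. A sequence $(\mu_n)\subset K^g$ converges boundedly and pointwise (bp) to $\mu:\mathds{R}^d\to\mathcal{M}^+$ if $\sup_n\|\mu_n\|_g<\infty$, $\mu_n(x)\to\mu(x)$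 vaguely for every $x$, and $\lim_{R\to\infty}\sup_n\sup_{x\in K}\mu_n(x,\{|y|>R\})=0$ for every compact $K$. *)

theory Defs
  imports "HOL-Analysis.Analysis"
begin

text \<open>Positive Radon (locally finite) measures on R^d minus the origin, represented as
  Borel measures on the whole space that give no mass to the origin and are finite on
  compact subsets of R^d minus the origin.\<close>
definition radon0 :: "'a::euclidean_space measure \<Rightarrow> bool" where
  "radon0 M \<longleftrightarrow> sets M = sets borel \<and> emeasure M {0} = 0 \<and>
     (\<forall>K. compact K \<and> K \<subseteq> - {0} \<longrightarrow> emeasure M K < \<infinity>)"

definition Cc0 :: "('a::euclidean_space \<Rightarrow> real) \<Rightarrow> bool" where
  "Cc0 f \<longleftrightarrow> continuous_on UNIV f \<and>
     (\<exists>K. compact K \<and> K \<subseteq> - {0} \<and> (\<forall>y. y \<notin> K \<longrightarrow> f y = 0))"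

definition vague_conv :: "(nat \<Rightarrow> 'a::euclidean_space measure) \<Rightarrow> 'a measure \<Rightarrow> bool" where
  "vague_conv Ms M \<longleftrightarrow>
     (\<forall>f. Cc0 f \<longrightarrow> (\<lambda>n. integral\<^sup>L (Ms n) f) \<longlonglongrightarrow> integral\<^sup>L M f)"

definition Kg :: "('a::euclidean_space \<Rightarrow> real) \<Rightarrow> ('a \<Rightarrow> 'a measure) set" where
  "Kg g = {\<mu>. (\<forall>x. radon0 (\<mu> x)) \<and>
     (\<forall>f. Cc0 f \<longrightarrow> (\<lambda>x. integral\<^sup>L (\<mu> x) f) \<in> borel_measurable borel) \<and>
     (SUP x. \<integral>\<^sup>+ y. ennreal (g y) \<partial>(\<mu> x)) < \<infinity> \<and>
     (\<forall>K. compact K \<longrightarrow>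
        ((\<lambda>R. SUP x\<in>K. emeasure (\<mu> x) {y. norm y > R}) \<longlongrightarrow> 0) at_top)}"

text \<open>Continuity into the
  vague topology (the initial topology of the maps M \<mapsto> integral of f, f in Cc0) means
  continuity of all compositions with these maps.\<close>
definition Cc_kernels :: "('a::euclidean_space \<Rightarrow> 'a measure) set" where
  "Cc_kernels = {\<mu>. (\<forall>x. radon0 (\<mu> x)) \<and>
     (\<forall>f. Cc0 f \<longrightarrow> continuous_on UNIV (\<lambda>x. integral\<^sup>L (\<mu> x) f)) \<and>
     (\<exists>K. compact K \<and> (\<forall>x. x \<notin> K \<longrightarrow> \<mu> x = null_measure borel))}"

definition bp_conv :: "('a::euclidean_space \<Rightarrow> real) \<Rightarrow> (nat \<Rightarrow> 'a \<Rightarrow> 'a measure) \<Rightarrow>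
    ('a \<Rightarrow> 'a measure) \<Rightarrow> bool" where
  "bp_conv g \<mu>s \<mu> \<longleftrightarrow> (\<forall>n. \<mu>s n \<in> Kg g) \<and> (\<forall>x. radon0 (\<mu> x)) \<and>
     (SUP n. SUP x. \<integral>\<^sup>+ y. ennreal (g y) \<partial>(\<mu>s n x)) < \<infinity> \<and>
     (\<forall>x. vague_conv (\<lambda>n. \<mu>s n x) (\<mu> x)) \<and>
     (\<forall>K. compact K \<longrightarrow>
        ((\<lambda>R. SUP n. SUP x\<in>K. emeasure (\<mu>s n x) {y. norm y > R}) \<longlongrightarrow> 0) at_top)"

definition bp_closed :: "('a::euclidean_space \<Rightarrow> real) \<Rightarrow> ('a \<Rightarrow> 'a measure) set \<Rightarrow> bool" where
  "bp_closed g S \<longleftrightarrow> (\<forall>\<mu>s \<mu>. (\<forall>n. \<mu>s n \<in> S) \<and> bp_conv g \<mu>s \<mu> \<and> \<mu> \<in> Kg g \<longrightarrow> \<mu> \<in> S)"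

definition bp_closure :: "('a::euclidean_space \<Rightarrow> real) \<Rightarrow> ('a \<Rightarrow> 'a measure) set \<Rightarrow>
    ('a \<Rightarrow> 'a measure) set" where
  "bp_closure g D = \<Inter>{S. S \<subseteq> Kg g \<and> D \<subseteq> S \<and> bp_closed g S}"

end

(* Let S be a bp-closed set with Cc_kernels \<inter> Kg g \<subseteq> S \<subseteq> Kg g; we show Kg g \<subseteq> S.
   A kernel \<mu> is the bp-limit of the discrete kernels
   x \<mapsto> \<Sum>z. (\<integral> \<psi>\<^sub>n\<^sub>z d\<mu>(x)) \<delta>(p\<^sub>n\<^sub>z), where \<psi>\<^sub>n is a partition of unity of mesh
   about 1/n on the annulus 1/(n+1) \<le> |y| \<le> n+1 and p\<^sub>n\<^sub>z minimises g near z, so that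
   the g-moments of the approximations stay below those of \<mu>.
   A discrete kernel with finitely many atoms and Borel coefficients lies in S: truncation
   reduces to bounded coefficients; bounded Borel functions are obtained from bounded
   continuous ones by iterated bounded pointwise limits, so the coefficients can be made
   continuous one at a time; and continuous coefficients multiplied by cutoffs vanishing
   outside balls give kernels in Cc_kernels. *)

theory Submission
  imports Defs
begin

section \<open>Bounded Borel functions are of Baire class\<close>

inductive baire :: "('a::metric_space \<Rightarrow> real) \<Rightarrow> bool" where
  continuous: "continuous_on UNIV h \<Longrightarrow> bounded (range h) \<Longrightarrow> baire h"
| limit: "(\<And>n. baire (hs n)) \<Longrightarrow> (\<And>n x. \<bar>hs n x\<bar> \<le> M) \<Longrightarrow>
    (\<And>x. (\<lambda>n. hs n x) \<longlonglongrightarrow> h x) \<Longrightarrow> baire h"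

lemma baire_borel_measurable: "baire h \<Longrightarrow> h \<in> borel_measurable borel"
proof (induction rule: baire.induct)
  case (continuous h)
  then show ?case by (simp add: borel_measurable_continuous_onI)
next
  case (limit hs M h)
  show ?case by (rule borel_measurable_LIMSEQ_real[OF limit(3) limit(4)])
qed

lemma LIMSEQ_abs_le_const:
  fixes h :: real
  assumes "hs \<longlonglongrightarrow> h" "\<And>n. \<bar>hs n\<bar> \<le> M"
  shows "\<bar>h\<bar> \<le> M"
  by (rule tendsto_le[OF _ tendsto_const tendsto_rabs[OF assms(1)]]) (use assms(2) in auto)

lemma baire_bounded: "baire h \<Longrightarrow> \<exists>M. \<forall>x. \<bar>h x\<bar> \<le> M"
proof (induction rule: baire.induct)
  case (continuous h)
  then show ?case by (metis bounded_real rangeI)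
next
  case (limit hs M h)
  then show ?case by (meson LIMSEQ_abs_le_const)
qed

lemma baire_cmult: "baire h \<Longrightarrow> baire (\<lambda>x. c * h x)"
proof (induction rule: baire.induct)
  case (continuous h)
  then obtain M where "\<forall>x. \<bar>h x\<bar> \<le> M" by (auto simp: bounded_real)
  then have "\<forall>x. \<bar>c * h x\<bar> \<le> \<bar>c\<bar> * M" by (simp add: abs_mult mult_left_mono)
  with continuous show ?case
    by (intro baire.continuous) (auto intro!: continuous_intros simp: bounded_real)
next
  case (limit hs M h)
  show ?case
    by (rule baire.limit[where hs="\<lambda>n x. c * hs n x" and M="\<bar>c\<bar> * M"])
       (use limit in \<open>auto intro: tendsto_intros simp: abs_mult mult_left_mono\<close>)
qed

lemma baire_add_continuous:
  assumes "baire h" "continuous_on UNIV k" "bounded (range k)"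
  shows "baire (\<lambda>x. h x + k x)"
  using assms(1)
proof (induction rule: baire.induct)
  case (continuous h)
  with assms show ?case
    by (intro baire.continuous) (auto intro!: continuous_intros bounded_plus_comp)
next
  case (limit hs M h)
  obtain K where K: "\<forall>x. \<bar>k x\<bar> \<le> K" using assms(3) by (auto simp: bounded_real)
  show ?case
    by (rule baire.limit[where hs="\<lambda>n x. hs n x + k x" and M="M + K"])
       (use limit K in \<open>auto intro: tendsto_intros order_trans[OF abs_triangle_ineq add_mono]\<close>)
qed

lemma baire_add:
  assumes "baire h" "baire k"
  shows "baire (\<lambda>x. h x + k x)"
  using assms(2)
proof (induction rule: baire.induct)
  case (continuous k)
  then show ?case using baire_add_continuous[OF assms(1)] by blast
next
  case (limit hs M k)
  obtain K where K: "\<forall>x. \<bar>h x\<bar> \<le> K" using baire_bounded[OF assms(1)] by auto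
  show ?case
    by (rule baire.limit[where hs="\<lambda>n x. h x + hs n x" and M="K + M"])
       (use limit K in \<open>auto intro: tendsto_intros order_trans[OF abs_triangle_ineq add_mono]\<close>)
qed

lemma baire_sum:
  "finite I \<Longrightarrow> (\<And>i. i \<in> I \<Longrightarrow> baire (f i)) \<Longrightarrow> baire (\<lambda>x. \<Sum>i\<in>I. f i x)"
proof (induction I rule: finite_induct)
  case empty
  show ?case by (rule baire.continuous) auto
next
  case (insert i I)
  then show ?case by (simp add: baire_add)
qed

lemma baire_indicator_open:
  assumes "open U"
  shows "baire (indicator U :: 'a::metric_space \<Rightarrow> real)"
proof (cases "U = UNIV")
  case True
  then show ?thesis by (auto intro!: baire.continuous)
next
  case False
  define hs where "hs n x = min 1 (real n * infdist x (- U))" for n x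
  show ?thesis
  proof (rule baire.limit[where hs=hs and M=1])
    show "baire (hs n)" for n
      unfolding hs_def
      by (intro baire.continuous)
         (auto intro!: continuous_intros exI[of _ 1] simp: bounded_real infdist_nonneg)
    show "\<bar>hs n x\<bar> \<le> 1" for n x by (auto simp: hs_def infdist_nonneg)
  next
    fix x
    show "(\<lambda>n. hs n x) \<longlonglongrightarrow> indicator U x"
    proof (cases "x \<in> U")
      case True
      have "infdist x (- U) > 0"
        using False True assms by (intro infdist_pos_not_in_closed) auto
      then obtain N where N: "1 \<le> real N * infdist x (- U)"
        by (metis real_arch_simple mult.commute pos_divide_le_eq less_eq_real_def)
      have "real N * infdist x (- U) \<le> real n * infdist x (- U)" if "N \<le> n" for n
        using that by (intro mult_right_mono) (auto simp: infdist_nonneg)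
      with N have "eventually (\<lambda>n. 1 \<le> real n * infdist x (- U)) sequentially"
        by (force simp: eventually_sequentially)
      then have "eventually (\<lambda>n. hs n x = 1) sequentially"
        by eventually_elim (simp add: hs_def)
      then show ?thesis using True by (simp add: tendsto_eventually)
    next
      case False
      then show ?thesis by (simp add: hs_def)
    qed
  qed
qed

lemma baire_indicator:
  assumes "A \<in> sets borel"
  shows "baire (indicator A :: 'a::metric_space \<Rightarrow> real)"
proof -
  have "Int_stable {S::'a set. open S}" by (auto simp: Int_stable_def)
  moreover have "{S::'a set. open S} \<subseteq> Pow UNIV" by simp
  moreover have "A \<in> sigma_sets UNIV {S. open S}" using assms by (simp add: sets_borel)
  ultimately show ?thesis
  proof (induction rule: sigma_sets_induct_disjoint)
    case (basic A)
    then show ?case by (simp add: baire_indicator_open)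
  next
    case empty
    show ?case by (auto intro!: baire.continuous)
  next
    case (compl A)
    have "baire (\<lambda>x. (-1) * indicator A x + 1 :: real)"
      using compl by (intro baire_add_continuous baire_cmult) auto
    moreover have "(\<lambda>x. (-1) * indicator A x + 1 :: real) = indicator (UNIV - A)"
      by (auto simp: indicator_def)
    ultimately show ?case by simp
  next
    case (union A)
    have partial_sums: "(\<Sum>i<n. indicator (A i) x :: real) = indicator (\<Union>i<n. A i) x" for n x
      using union(1) by (intro indicator_UN_disjoint[symmetric]) (auto simp: disjoint_family_on_def)
    show ?case
    proof (rule baire.limit[where hs="\<lambda>n x. \<Sum>i<n. indicator (A i) x" and M=1])
      show "baire (\<lambda>x. \<Sum>i<n. indicator (A i) x :: real)" for n
        using union(3) by (intro baire_sum) auto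
      show "\<bar>\<Sum>i<n. indicator (A i) x :: real\<bar> \<le> 1" for n x
        unfolding partial_sums by simp
      show "(\<lambda>n. \<Sum>i<n. indicator (A i) x :: real) \<longlonglongrightarrow> indicator (\<Union>i. A i) x" for x
      proof (cases "\<exists>i. x \<in> A i")
        case True
        then obtain i where "x \<in> A i" by auto
        then have "eventually (\<lambda>n. (\<Sum>i<n. indicator (A i) x :: real) = 1) sequentially"
          unfolding partial_sums eventually_sequentially
          by (intro exI[of _ "Suc i"]) (auto simp: indicator_def)
        then show ?thesis using True by (simp add: tendsto_eventually)
      next
        case False
        then show ?thesis unfolding partial_sums by simp
      qed
    qed
  qed
qed

lemma dist_floor_scaled_le:
  fixes t m :: real
  assumes "0 < m"
  shows "dist (of_int \<lfloor>m * t\<rfloor> / m) t \<le> 1 / m"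
proof -
  have "of_int \<lfloor>m * t\<rfloor> / m - t = (of_int \<lfloor>m * t\<rfloor> - m * t) / m"
    using assms by (simp add: field_simps)
  moreover have "\<bar>of_int \<lfloor>m * t\<rfloor> - m * t\<bar> \<le> 1" by linarith
  ultimately show ?thesis
    using assms by (simp add: dist_real_def abs_div_pos divide_right_mono)
qed

lemma baire_if_bounded_borel:
  fixes h :: "'a::metric_space \<Rightarrow> real"
  assumes h: "h \<in> borel_measurable borel" and bounded: "\<And>x. \<bar>h x\<bar> \<le> B"
  shows "baire h"
proof -
  define m :: "nat \<Rightarrow> real" where "m n = real (Suc n)" for n
  define hs where "hs n x = of_int \<lfloor>m n * h x\<rfloor> / m n" for n x
  have close: "dist (hs n x) (h x) \<le> 1 / m n" for n x
    unfolding hs_def m_def by (rule dist_floor_scaled_le) simp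
  show ?thesis
  proof (rule baire.limit[where hs=hs and M="B + 1"])
    fix n
    define K where "K = {-\<lceil>m n * B\<rceil> - 1 .. \<lceil>m n * B\<rceil>}"
    have floor_in_K: "\<lfloor>m n * h x\<rfloor> \<in> K" for x
    proof -
      have "\<bar>m n * h x\<bar> \<le> m n * B"
        using bounded[of x] by (simp add: m_def abs_mult mult_left_mono)
      then show ?thesis unfolding K_def by (auto simp: abs_le_iff) linarith+
    qed
    have "(\<Sum>k\<in>K. (of_int k / m n) * indicator {y. \<lfloor>m n * h y\<rfloor> = k} x)
        = (\<Sum>k\<in>K. if k = \<lfloor>m n * h x\<rfloor> then of_int k / m n else 0)" for x
      by (intro sum.cong) (auto simp: indicator_def)
    then have "hs n = (\<lambda>x. \<Sum>k\<in>K. (of_int k / m n) * indicator {y. \<lfloor>m n * h y\<rfloor> = k} x)"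
      using floor_in_K by (simp add: hs_def K_def sum.delta' fun_eq_iff)
    moreover have "baire (\<lambda>x. (of_int k / m n) * indicator {y. \<lfloor>m n * h y\<rfloor> = k} x)" for k
      using h by (intro baire_cmult baire_indicator) measurable
    ultimately show "baire (hs n)" by (simp add: K_def baire_sum)
  next
    fix n x
    have "1 / m n \<le> 1" by (simp add: m_def)
    then show "\<bar>hs n x\<bar> \<le> B + 1"
      using close[of n x] bounded[of x] unfolding dist_real_def by linarith
  next
    show "(\<lambda>n. hs n x) \<longlonglongrightarrow> h x" for x
    proof (rule tendsto_dist_iff[THEN iffD2], rule Lim_null_comparison)
      show "eventually (\<lambda>n. norm (dist (hs n x) (h x)) \<le> 1 / m n) sequentially"
        using close by simp
      show "(\<lambda>n. 1 / m n) \<longlonglongrightarrow> 0"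
        unfolding m_def by (rule LIMSEQ_Suc[OF lim_const_over_n])
    qed
  qed
qed

lemma bounded_borel_induct[consumes 2, case_names continuous limit]:
  fixes P :: "('a::metric_space \<Rightarrow> real) \<Rightarrow> bool"
  assumes "h \<in> borel_measurable borel" "\<And>x. \<bar>h x\<bar> \<le> B"
    and "\<And>h. continuous_on UNIV h \<Longrightarrow> bounded (range h) \<Longrightarrow> P h"
    and "\<And>hs h M. (\<And>n. P (hs n)) \<Longrightarrow> (\<And>n. hs n \<in> borel_measurable borel) \<Longrightarrow>
        h \<in> borel_measurable borel \<Longrightarrow> (\<And>n x. \<bar>hs n x\<bar> \<le> M) \<Longrightarrow>
        (\<And>x. (\<lambda>n. hs n x) \<longlonglongrightarrow> h x) \<Longrightarrow> P h"
  shows "P h"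
  using baire_if_bounded_borel[OF assms(1,2)]
proof (induction rule: baire.induct)
  case (continuous h)
  then show ?case by (rule assms(3))
next
  case (limit hs M h)
  then show ?case
    using baire.limit baire_borel_measurable by (metis assms(4))
qed

section \<open>Test functions and locally finite measures\<close>

lemma Cc0_borel_measurable: "Cc0 f \<Longrightarrow> f \<in> borel_measurable borel"
  by (auto simp: Cc0_def intro: borel_measurable_continuous_onI)

lemma measurable_radon0: "radon0 M \<Longrightarrow> f \<in> borel_measurable borel \<Longrightarrow> f \<in> borel_measurable M"
  unfolding radon0_def using measurable_cong_sets[of M borel borel borel] by blast

lemma integrable_Cc0:
  fixes f :: "'a::euclidean_space \<Rightarrow> real"
  assumes M: "radon0 M" and f: "Cc0 f"
  shows "integrable M f"
proof -
  obtain K where K: "compact K" "K \<subseteq> - {0}" "\<And>y. y \<notin> K \<Longrightarrow> f y = 0"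
    and f_continuous: "continuous_on UNIV f"
    using f unfolding Cc0_def by blast
  obtain B where B: "\<And>y. y \<in> K \<Longrightarrow> \<bar>f y\<bar> \<le> B"
    using compact_imp_bounded[OF compact_continuous_image[OF continuous_on_subset[OF f_continuous] K(1)]]
    by (auto simp: bounded_real)
  have K_sets: "K \<in> sets M" using M K(1) by (simp add: radon0_def borel_compact)
  have "emeasure M K < \<infinity>" using M K(1,2) unfolding radon0_def by blast
  then have bound_integrable: "integrable M (\<lambda>y. B * indicator K y)"
    using K_sets by (intro integrable_mult_right integrable_real_indicator) auto
  have "norm (f y) \<le> norm (B * indicator K y)" for y
    using B K(3) by (cases "y \<in> K") (auto intro: order_trans[OF _ abs_ge_self])
  then show ?thesis
    using Bochner_Integration.integrable_bound[OF bound_integrable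
        measurable_radon0[OF M Cc0_borel_measurable[OF f]]]
    by (simp add: AE_I2)
qed

lemma nn_integral_Cc0_eq_integral:
  assumes "radon0 M" "Cc0 f" "\<And>y. 0 \<le> f y"
  shows "(\<integral>\<^sup>+ y. ennreal (f y) \<partial>M) = ennreal (integral\<^sup>L M f)"
  using assms by (simp add: nn_integral_eq_integral integrable_Cc0)

lemma abs_integral_diff_le_indicator:
  fixes f h :: "'a \<Rightarrow> real"
  assumes "integrable M f" "integrable M h" "L \<in> sets M" "emeasure M L < \<infinity>"
    and "\<And>y. \<bar>f y - h y\<bar> \<le> \<epsilon> * indicator L y"
  shows "\<bar>integral\<^sup>L M f - integral\<^sup>L M h\<bar> \<le> \<epsilon> * measure M L"
proof -
  have "\<bar>integral\<^sup>L M f - integral\<^sup>L M h\<bar> = \<bar>integral\<^sup>L M (\<lambda>y. f y - h y)\<bar>"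
    using assms(1,2) by simp
  also have "\<dots> \<le> integral\<^sup>L M (\<lambda>y. \<epsilon> * indicator L y)"
    using assms by (intro integral_abs_bound[THEN order_trans] integral_mono) auto
  also have "\<dots> = \<epsilon> * measure M L"
    using assms(3,4) by simp
  finally show ?thesis .
qed

lemma compact_annulus: "compact {y::'a::euclidean_space. a \<le> norm y \<and> norm y \<le> R}"
proof -
  have "closed {y::'a. a \<le> norm y \<and> norm y \<le> R}"
    by (intro closed_Collect_conj closed_Collect_le continuous_intros)
  moreover have "bounded {y::'a. a \<le> norm y \<and> norm y \<le> R}"
    by (auto simp: bounded_iff)
  ultimately show ?thesis by (simp add: compact_eq_bounded_closed)
qed

lemma compact_subset_annulus:
  fixes K :: "'a::euclidean_space set"
  assumes "compact K" "K \<subseteq> - {0}"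
  obtains a R where "0 < a" "\<And>y. y \<in> K \<Longrightarrow> a \<le> norm y \<and> norm y \<le> R"
proof -
  obtain a where "0 < a" "ball 0 a \<subseteq> - K"
    using open_contains_ball[of "- K"] compact_imp_closed[OF assms(1)] assms(2) by auto
  moreover obtain R where "\<And>y. y \<in> K \<Longrightarrow> norm y \<le> R"
    using compact_imp_bounded[OF assms(1)] by (auto simp: bounded_iff)
  ultimately show ?thesis
    using that[of a R] by (force simp: subset_eq)
qed

lemma Cc0_modulus_of_continuity:
  fixes f :: "'a::euclidean_space \<Rightarrow> real"
  assumes "Cc0 f"
  obtains L where "compact L" "L \<subseteq> - {0}"
    "\<And>e. 0 < e \<Longrightarrow> \<exists>d>0. \<forall>y y'. dist y y' < d \<longrightarrow> \<bar>f y - f y'\<bar> \<le> e * indicator L y"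
proof -
  obtain K where K: "compact K" "K \<subseteq> - {0}" "\<And>y. y \<notin> K \<Longrightarrow> f y = 0"
    and f: "continuous_on UNIV f"
    using assms unfolding Cc0_def by blast
  obtain a R where a: "0 < a" and K_annulus: "\<And>y. y \<in> K \<Longrightarrow> a \<le> norm y \<and> norm y \<le> R"
    using compact_subset_annulus[OF K(1,2)] by blast
  define L where "L = {y::'a. a / 2 \<le> norm y \<and> norm y \<le> R + 1}"
  have "compact L" unfolding L_def by (rule compact_annulus)
  moreover have "L \<subseteq> - {0}" using a by (auto simp: L_def)
  moreover have "\<exists>d>0. \<forall>y y'. dist y y' < d \<longrightarrow> \<bar>f y - f y'\<bar> \<le> e * indicator L y" if "0 < e" for e
  proof -
    obtain d where d: "0 < d" "\<And>y y'. y \<in> L \<Longrightarrow> y' \<in> L \<Longrightarrow> dist y' y < d \<Longrightarrow> dist (f y') (f y) < e"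
      using compact_uniformly_continuous[OF continuous_on_subset[OF f] \<open>compact L\<close>] \<open>0 < e\<close>
      unfolding uniformly_continuous_on_def by (metis subset_UNIV)
    have "\<bar>f y - f y'\<bar> \<le> e * indicator L y" if "dist y y' < min d (min (a / 2) 1)" for y y'
    proof (cases "f y = f y'")
      case True
      then show ?thesis using \<open>0 < e\<close> by simp
    next
      case False
      then have "y \<in> K \<or> y' \<in> K" using K(3) by metis
      moreover have "\<bar>norm y - norm y'\<bar> < min (a / 2) 1"
        using that norm_triangle_ineq3[of y y'] by (simp add: dist_norm)
      then have "norm y - norm y' < a / 2" "norm y' - norm y < a / 2"
        "norm y - norm y' < 1" "norm y' - norm y < 1"
        by (simp_all only: min_less_iff_conj abs_less_iff) linarith+
      ultimately have "y \<in> L \<and> y' \<in> L"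
        using K_annulus[of y] K_annulus[of y'] unfolding L_def by auto
      then show ?thesis
        using d(2)[of y' y] that by (simp add: dist_real_def dist_commute less_imp_le)
    qed
    then show ?thesis using d(1) a by (intro exI[of _ "min d (min (a / 2) 1)"]) auto
  qed
  ultimately show ?thesis by (rule that)
qed

section \<open>Kernels with finitely many atoms\<close>

(* The kernel x \<mapsto> \<Sum>z\<in>U. c z x \<cdot> \<delta>(p z). *)
definition discrete_kernel ::
    "'i set \<Rightarrow> ('i \<Rightarrow> 'a) \<Rightarrow> ('i \<Rightarrow> 'a \<Rightarrow> real) \<Rightarrow> 'a \<Rightarrow> 'a::euclidean_space measure" where
  "discrete_kernel U p c x = distr (point_measure U (\<lambda>z. ennreal (c z x))) borel p"

lemma sets_discrete_kernel [simp, measurable_cong]: "sets (discrete_kernel U p c x) = sets borel"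
  by (simp add: discrete_kernel_def)

lemma emeasure_discrete_kernel:
  assumes "finite U" "A \<in> sets borel"
  shows "emeasure (discrete_kernel U p c x) A = (\<Sum>z\<in>{z\<in>U. p z \<in> A}. ennreal (c z x))"
proof -
  have "emeasure (discrete_kernel U p c x) A
      = emeasure (point_measure U (\<lambda>z. ennreal (c z x))) {z\<in>U. p z \<in> A}"
    unfolding discrete_kernel_def using assms
    by (subst emeasure_distr) (auto simp: space_point_measure Int_def conj_commute)
  also have "\<dots> = (\<Sum>z\<in>{z\<in>U. p z \<in> A}. ennreal (c z x))"
    using assms by (intro emeasure_point_measure_finite) auto
  finally show ?thesis .
qed

lemma nn_integral_discrete_kernel:
  assumes "finite U" "h \<in> borel_measurable borel"
  shows "(\<integral>\<^sup>+ y. h y \<partial>discrete_kernel U p c x) = (\<Sum>z\<in>U. ennreal (c z x) * h (p z))"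
  unfolding discrete_kernel_def using assms
  by (subst nn_integral_distr) (auto simp: nn_integral_point_measure_finite)

lemma integral_discrete_kernel:
  fixes f :: "'a::euclidean_space \<Rightarrow> real"
  assumes "finite U" "f \<in> borel_measurable borel" "\<And>z. z \<in> U \<Longrightarrow> 0 \<le> c z x"
  shows "integral\<^sup>L (discrete_kernel U p c x) f = (\<Sum>z\<in>U. c z x * f (p z))"
  unfolding discrete_kernel_def using assms
  by (subst integral_distr) (auto simp: lebesgue_integral_point_measure_finite)

lemma discrete_kernel_eq_null_measure:
  assumes "finite U" "\<And>z. z \<in> U \<Longrightarrow> c z x = 0"
  shows "discrete_kernel U p c x = null_measure borel"
  by (rule measure_eqI) (auto simp: emeasure_discrete_kernel assms)

lemma radon0_discrete_kernel:
  assumes "finite U" "\<And>z. z \<in> U \<Longrightarrow> p z \<noteq> 0"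
  shows "radon0 (discrete_kernel U p c x)"
  using assms by (auto simp: radon0_def emeasure_discrete_kernel borel_compact)

lemma emeasure_discrete_kernel_outside_ball:
  fixes p :: "'i \<Rightarrow> 'a::euclidean_space"
  assumes "finite U" "(\<Sum>z\<in>U. norm (p z)) \<le> R"
  shows "emeasure (discrete_kernel U p c x) {y. norm y > R} = 0"
proof -
  have "norm (p z) \<le> R" if "z \<in> U" for z
    using assms member_le_sum[of z U "\<lambda>z. norm (p z)"] that by force
  then have "{z\<in>U. p z \<in> {y. norm y > R}} = {}" by force
  moreover have "{y::'a. norm y > R} \<in> sets borel" by measurable
  ultimately show ?thesis by (metis emeasure_discrete_kernel[OF assms(1)] sum.empty)
qed

lemma tails_discrete_kernel:
  assumes "finite U"
  shows "((\<lambda>R. SUP i\<in>I. SUP x\<in>K. emeasure (discrete_kernel U p (c i) x) {y. norm y > R}) \<longlongrightarrow> 0) at_top"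
proof (rule tendsto_eventually)
  show "eventually (\<lambda>R. (SUP i\<in>I. SUP x\<in>K. emeasure (discrete_kernel U p (c i) x) {y. norm y > R}) = 0) at_top"
    using emeasure_discrete_kernel_outside_ball[OF assms]
    by (auto simp: eventually_at_top_linorder bot_ennreal[symmetric] intro!: exI[of _ "\<Sum>z\<in>U. norm (p z)"])
qed

lemma discrete_kernel_in_Kg:
  fixes g :: "'a::euclidean_space \<Rightarrow> real"
  assumes U: "finite U" and p: "\<And>z. z \<in> U \<Longrightarrow> p z \<noteq> 0"
    and g: "g \<in> borel_measurable borel"
    and c: "\<And>z. z \<in> U \<Longrightarrow> c z \<in> borel_measurable borel" "\<And>z x. z \<in> U \<Longrightarrow> 0 \<le> c z x"
    and sup: "(SUP x. \<Sum>z\<in>U. ennreal (c z x) * ennreal (g (p z))) < \<infinity>"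
  shows "discrete_kernel U p c \<in> Kg g"
  unfolding Kg_def
proof (intro CollectI conjI allI impI)
  show "radon0 (discrete_kernel U p c x)" for x by (rule radon0_discrete_kernel[OF U p])
next
  fix f :: "'a \<Rightarrow> real"
  assume "Cc0 f"
  then have "(\<lambda>x. integral\<^sup>L (discrete_kernel U p c x) f) = (\<lambda>x. \<Sum>z\<in>U. c z x * f (p z))"
    using integral_discrete_kernel[OF U Cc0_borel_measurable] c(2) by blast
  then show "(\<lambda>x. integral\<^sup>L (discrete_kernel U p c x) f) \<in> borel_measurable borel"
    using c(1) by simp
next
  show "(SUP x. \<integral>\<^sup>+ y. ennreal (g y) \<partial>discrete_kernel U p c x) < \<infinity>"
    using sup g by (simp add: nn_integral_discrete_kernel[OF U])
next
  show "((\<lambda>R. SUP x\<in>K. emeasure (discrete_kernel U p c x) {y. norm y > R}) \<longlongrightarrow> 0) at_top" for K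
    using tails_discrete_kernel[OF U, where I=UNIV and c="\<lambda>_. c"] by simp
qed

lemma bp_conv_discrete_kernel:
  fixes g :: "'a::euclidean_space \<Rightarrow> real"
  assumes U: "finite U" and p: "\<And>z. z \<in> U \<Longrightarrow> p z \<noteq> 0"
    and g: "g \<in> borel_measurable borel"
    and cs: "\<And>n z. z \<in> U \<Longrightarrow> cs n z \<in> borel_measurable borel" "\<And>n z x. z \<in> U \<Longrightarrow> 0 \<le> cs n z x"
    and c: "\<And>z x. z \<in> U \<Longrightarrow> 0 \<le> c z x"
    and lim: "\<And>z x. z \<in> U \<Longrightarrow> (\<lambda>n. cs n z x) \<longlonglongrightarrow> c z x"
    and sup: "(SUP n. SUP x. \<Sum>z\<in>U. ennreal (cs n z x) * ennreal (g (p z))) < \<infinity>"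
  shows "bp_conv g (\<lambda>n. discrete_kernel U p (cs n)) (discrete_kernel U p c)"
  unfolding bp_conv_def
proof (intro conjI allI impI)
  fix n
  have "(SUP x. \<Sum>z\<in>U. ennreal (cs n z x) * ennreal (g (p z)))
      \<le> (SUP n. SUP x. \<Sum>z\<in>U. ennreal (cs n z x) * ennreal (g (p z)))"
    by (rule SUP_upper) simp
  with sup show "discrete_kernel U p (cs n) \<in> Kg g"
    by (intro discrete_kernel_in_Kg[OF U p g cs]) auto
next
  show "radon0 (discrete_kernel U p c x)" for x by (rule radon0_discrete_kernel[OF U p])
next
  show "(SUP n. SUP x. \<integral>\<^sup>+ y. ennreal (g y) \<partial>discrete_kernel U p (cs n) x) < \<infinity>"
    using sup g by (simp add: nn_integral_discrete_kernel[OF U])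
next
  fix x
  show "vague_conv (\<lambda>n. discrete_kernel U p (cs n) x) (discrete_kernel U p c x)"
    unfolding vague_conv_def
  proof (intro allI impI)
    fix f :: "'a \<Rightarrow> real"
    assume "Cc0 f"
    then have f: "f \<in> borel_measurable borel" by (rule Cc0_borel_measurable)
    show "(\<lambda>n. integral\<^sup>L (discrete_kernel U p (cs n) x) f) \<longlonglongrightarrow> integral\<^sup>L (discrete_kernel U p c x) f"
      using lim by (simp add: integral_discrete_kernel[OF U f] cs(2) c tendsto_sum tendsto_mult_right)
  qed
next
  show "((\<lambda>R. SUP n. SUP x\<in>K. emeasure (discrete_kernel U p (cs n) x) {y. norm y > R}) \<longlongrightarrow> 0) at_top"
    for K by (rule tails_discrete_kernel[OF U])
qed

lemma SUP_discrete_weights_less_top: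
  assumes "finite U" "\<And>n z x. z \<in> U \<Longrightarrow> cs n z x \<le> B"
  shows "(SUP n. SUP x. \<Sum>z\<in>U. ennreal (cs n z x) * ennreal (w z)) < \<infinity>"
proof -
  have "(SUP n. SUP x. \<Sum>z\<in>U. ennreal (cs n z x) * ennreal (w z)) \<le> (\<Sum>z\<in>U. ennreal B * ennreal (w z))"
    using assms(2) by (intro SUP_least sum_mono mult_right_mono ennreal_leI) auto
  also have "\<dots> < \<infinity>" using assms(1) by (simp add: ennreal_mult_less_top)
  finally show ?thesis .
qed

section \<open>bp-closed sets containing the continuous kernels\<close>

locale bp_closed_superset =
  fixes g :: "'a::euclidean_space \<Rightarrow> real" and S :: "('a \<Rightarrow> 'a measure) set"
  assumes g_borel: "g \<in> borel_measurable borel"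
    and Cc_kernels_subset: "Cc_kernels \<inter> Kg g \<subseteq> S"
    and bp_closed: "bp_closed g S"

begin

lemma mem_if_bp_conv: "(\<And>n. \<mu>s n \<in> S) \<Longrightarrow> bp_conv g \<mu>s \<mu> \<Longrightarrow> \<mu> \<in> Kg g \<Longrightarrow> \<mu> \<in> S"
  using bp_closed unfolding bp_closed_def by blast

lemma discrete_kernel_limit_mem:
  assumes U: "finite U" and p: "\<And>z. z \<in> U \<Longrightarrow> p z \<noteq> 0"
    and mem: "\<And>n. discrete_kernel U p (cs n) \<in> S"
    and cs: "\<And>n z. z \<in> U \<Longrightarrow> cs n z \<in> borel_measurable borel" "\<And>n z x. z \<in> U \<Longrightarrow> 0 \<le> cs n z x"
    and c: "\<And>z. z \<in> U \<Longrightarrow> c z \<in> borel_measurable borel" "\<And>z x. z \<in> U \<Longrightarrow> 0 \<le> c z x"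
    and lim: "\<And>z x. z \<in> U \<Longrightarrow> (\<lambda>n. cs n z x) \<longlonglongrightarrow> c z x"
    and sup_cs: "(SUP n. SUP x. \<Sum>z\<in>U. ennreal (cs n z x) * ennreal (g (p z))) < \<infinity>"
    and sup_c: "(SUP x. \<Sum>z\<in>U. ennreal (c z x) * ennreal (g (p z))) < \<infinity>"
  shows "discrete_kernel U p c \<in> S"
  using mem bp_conv_discrete_kernel[OF U p g_borel cs c(2) lim sup_cs]
    discrete_kernel_in_Kg[OF U p g_borel c sup_c]
  by (rule mem_if_bp_conv)

lemma discrete_kernel_bounded_limit_mem:
  assumes U: "finite U" and p: "\<And>z. z \<in> U \<Longrightarrow> p z \<noteq> 0"
    and mem: "\<And>n. discrete_kernel U p (cs n) \<in> S"
    and cs: "\<And>n z. z \<in> U \<Longrightarrow> cs n z \<in> borel_measurable borel"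
      "\<And>n z x. z \<in> U \<Longrightarrow> 0 \<le> cs n z x \<and> cs n z x \<le> B"
    and lim: "\<And>z x. z \<in> U \<Longrightarrow> (\<lambda>n. cs n z x) \<longlonglongrightarrow> c z x"
  shows "discrete_kernel U p c \<in> S"
proof (rule discrete_kernel_limit_mem[OF U p mem cs(1)])
  show "c z \<in> borel_measurable borel" if "z \<in> U" for z
    by (rule borel_measurable_LIMSEQ_real[OF lim cs(1)]) (use that in auto)
  have c_bounds: "0 \<le> c z x \<and> c z x \<le> B" if "z \<in> U" for z x
  proof
    show "0 \<le> c z x" by (rule LIMSEQ_le_const[OF lim[OF that]]) (use cs(2)[OF that] in blast)
    show "c z x \<le> B" by (rule LIMSEQ_le_const2[OF lim[OF that]]) (use cs(2)[OF that] in blast)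
  qed
  then show "0 \<le> c z x" if "z \<in> U" for z x
    using that by blast
  show "(SUP x. \<Sum>z\<in>U. ennreal (c z x) * ennreal (g (p z))) < \<infinity>"
    using SUP_discrete_weights_less_top[OF U, where cs="\<lambda>_. c" and B=B] c_bounds by simp
  show "(SUP n. SUP x. \<Sum>z\<in>U. ennreal (cs n z x) * ennreal (g (p z))) < \<infinity>"
    by (rule SUP_discrete_weights_less_top[OF U]) (use cs(2) in blast)
  show "0 \<le> cs n z x" if "z \<in> U" for n z x
    using that cs(2) by blast
qed (simp_all add: lim)

lemma discrete_kernel_mem_continuous:
  assumes U: "finite U" and p: "\<And>z. z \<in> U \<Longrightarrow> p z \<noteq> 0"
    and c: "\<And>z. z \<in> U \<Longrightarrow> continuous_on UNIV (c z)"
      "\<And>z x. z \<in> U \<Longrightarrow> 0 \<le> c z x \<and> c z x \<le> B"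
  shows "discrete_kernel U p c \<in> S"
proof -
  define cutoff :: "nat \<Rightarrow> 'a \<Rightarrow> real" where "cutoff n x = max 0 (min 1 (real n + 1 - norm x))" for n x
  define cs where "cs n z x = cutoff n x * c z x" for n z x
  have cs_continuous: "continuous_on UNIV (cs n z)" if "z \<in> U" for n z
    unfolding cs_def cutoff_def using c(1)[OF that] by (intro continuous_intros)
  have cs_bounds: "0 \<le> cs n z x \<and> cs n z x \<le> B" if "z \<in> U" for n z x
    using c(2)[OF that, of x] mult_right_le_one_le[of "c z x" "cutoff n x"]
    by (auto simp: cs_def cutoff_def mult.commute)
  have in_Cc_kernels: "discrete_kernel U p (cs n) \<in> Cc_kernels" for n
    unfolding Cc_kernels_def
  proof (intro CollectI conjI allI impI)
    show "radon0 (discrete_kernel U p (cs n) x)" for x by (rule radon0_discrete_kernel[OF U p])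
  next
    fix f :: "'a \<Rightarrow> real"
    assume "Cc0 f"
    then have eq: "(\<lambda>x. integral\<^sup>L (discrete_kernel U p (cs n) x) f) = (\<lambda>x. \<Sum>z\<in>U. cs n z x * f (p z))"
      using integral_discrete_kernel[OF U Cc0_borel_measurable] cs_bounds by blast
    have "continuous_on UNIV (\<lambda>x. \<Sum>z\<in>U. cs n z x * f (p z))"
      using cs_continuous by (auto intro!: continuous_intros)
    then show "continuous_on UNIV (\<lambda>x. integral\<^sup>L (discrete_kernel U p (cs n) x) f)"
      by (subst eq)
  next
    have "discrete_kernel U p (cs n) x = null_measure borel" if "x \<notin> cball 0 (real n + 1)" for x
      using that by (intro discrete_kernel_eq_null_measure[OF U]) (simp add: cs_def cutoff_def)
    then show "\<exists>K. compact K \<and> (\<forall>x. x \<notin> K \<longrightarrow> discrete_kernel U p (cs n) x = null_measure borel)"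
      using compact_cball by blast
  qed
  have in_Kg: "discrete_kernel U p (cs n) \<in> Kg g" for n
    using SUP_discrete_weights_less_top[OF U, where cs="\<lambda>_. cs n" and B=B] cs_bounds
    by (intro discrete_kernel_in_Kg[OF U p g_borel] borel_measurable_continuous_onI cs_continuous) auto
  have lim: "(\<lambda>n. cs n z x) \<longlonglongrightarrow> c z x" for z x
  proof (rule tendsto_eventually, rule eventually_sequentiallyI)
    fix n
    assume "nat \<lceil>norm x\<rceil> \<le> n"
    then show "cs n z x = c z x" by (simp add: cs_def cutoff_def)
  qed
  show ?thesis
  proof (rule discrete_kernel_bounded_limit_mem[OF U p, where cs=cs and B=B])
    show "discrete_kernel U p (cs n) \<in> S" for n
      using in_Cc_kernels in_Kg Cc_kernels_subset by blast
    show "cs n z \<in> borel_measurable borel" if "z \<in> U" for n z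
      using cs_continuous[OF that] by (rule borel_measurable_continuous_onI)
  qed (use cs_bounds lim in blast)+
qed

(* Induction on the set T of coefficients that are only Borel: the coefficient at a new
   index is reached from continuous ones by bounded_borel_induct, every step being a
   bp-limit of discrete kernels. *)
lemma discrete_kernel_mem_partly_continuous:
  assumes U: "finite U" and p: "\<And>z. z \<in> U \<Longrightarrow> p z \<noteq> 0"
    and "finite T" "T \<subseteq> U"
    and "\<And>z. z \<in> T \<Longrightarrow> c z \<in> borel_measurable borel"
    and "\<And>z. z \<in> U - T \<Longrightarrow> continuous_on UNIV (c z)"
    and "\<And>z x. z \<in> U \<Longrightarrow> 0 \<le> c z x \<and> c z x \<le> B"
  shows "discrete_kernel U p c \<in> S"
  using assms(3-)
proof (induction T arbitrary: c B rule: finite_induct)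
  case empty
  then show ?case by (intro discrete_kernel_mem_continuous[OF U p]) auto
next
  case (insert a T)
  define upd where "upd h = c(a := (\<lambda>x. max 0 (h x)))" for h :: "'a \<Rightarrow> real"
  have upd_bounds: "0 \<le> upd h z x \<and> upd h z x \<le> max B M"
    if "z \<in> U" "\<And>x. \<bar>h x\<bar> \<le> M" for z h x M
    using that(1) that(2)[of x] insert.prems(4)[of z x] by (auto simp: upd_def abs_le_iff)
  have upd_borel: "upd h z \<in> borel_measurable borel"
    if "z \<in> U" "h \<in> borel_measurable borel" for z h
    using that insert.prems(2,3) borel_measurable_continuous_onI[of "c z"]
    by (cases "z = a") (auto simp: upd_def)
  have "c a \<in> borel_measurable borel" "\<And>x. \<bar>c a x\<bar> \<le> B"
    using insert.prems(1,2,4) by auto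
  then have "discrete_kernel U p (upd (c a)) \<in> S"
  proof (induction rule: bounded_borel_induct)
    case (continuous h)
    then obtain M where M: "\<And>x. \<bar>h x\<bar> \<le> M" by (auto simp: bounded_real)
    show ?case
    proof (rule insert.IH)
      show "T \<subseteq> U" using insert.prems(1) by simp
      show "upd h z \<in> borel_measurable borel" if "z \<in> T" for z
        using that insert.hyps(2) insert.prems(2) by (auto simp: upd_def)
      show "continuous_on UNIV (upd h z)" if "z \<in> U - T" for z
        using that insert.prems(3) continuous by (auto simp: upd_def intro!: continuous_intros)
      show "0 \<le> upd h z x \<and> upd h z x \<le> max B M" if "z \<in> U" for z x
        using that M by (rule upd_bounds)
    qed
  next
    case (limit hs h M)
    show ?case
    proof (rule discrete_kernel_bounded_limit_mem[OF U p, where cs="\<lambda>n. upd (hs n)" and B="max B M"])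
      show "discrete_kernel U p (upd (hs n)) \<in> S" for n by (fact limit.IH)
      show "upd (hs n) z \<in> borel_measurable borel" if "z \<in> U" for n z
        using that limit.hyps(1) by (rule upd_borel)
      show "0 \<le> upd (hs n) z x \<and> upd (hs n) z x \<le> max B M" if "z \<in> U" for n z x
        using that limit.hyps(3) by (rule upd_bounds)
      show "(\<lambda>n. upd (hs n) z x) \<longlonglongrightarrow> upd h z x" if "z \<in> U" for z x
        using limit.hyps(4) by (auto simp: upd_def intro!: tendsto_intros)
    qed
  qed
  moreover have "upd (c a) = c"
    using insert.prems(1,4) by (auto simp: upd_def fun_eq_iff max_def)
  ultimately show ?case by simp
qed

lemma discrete_kernel_mem:
  assumes U: "finite U" and p: "\<And>z. z \<in> U \<Longrightarrow> p z \<noteq> 0"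
    and c: "\<And>z. z \<in> U \<Longrightarrow> c z \<in> borel_measurable borel" "\<And>z x. z \<in> U \<Longrightarrow> 0 \<le> c z x"
    and sup: "(SUP x. \<Sum>z\<in>U. ennreal (c z x) * ennreal (g (p z))) < \<infinity>"
  shows "discrete_kernel U p c \<in> S"
proof -
  define cs where "cs m z x = min (c z x) (real m)" for m z x
  show ?thesis
  proof (rule discrete_kernel_limit_mem[OF U p, where cs=cs])
    have cs_borel: "cs m z \<in> borel_measurable borel" if "z \<in> U" for m z
      unfolding cs_def using c(1)[OF that] by measurable
    then show "cs m z \<in> borel_measurable borel" if "z \<in> U" for m z
      using that .
    show "discrete_kernel U p (cs m) \<in> S" for m
      by (rule discrete_kernel_mem_partly_continuous[OF U p U subset_refl, where B="real m"])
        (use cs_borel c(2) in \<open>auto simp: cs_def\<close>)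
    show "0 \<le> cs m z x" if "z \<in> U" for m z x
      using c(2)[OF that] by (simp add: cs_def)
    show "(\<lambda>m. cs m z x) \<longlonglongrightarrow> c z x" for z x
    proof (rule tendsto_eventually, rule eventually_sequentiallyI)
      fix m
      assume "nat \<lceil>c z x\<rceil> \<le> m"
      then show "cs m z x = c z x" by (simp add: cs_def)
    qed
    have "(SUP m. SUP x. \<Sum>z\<in>U. ennreal (cs m z x) * ennreal (g (p z)))
        \<le> (SUP x. \<Sum>z\<in>U. ennreal (c z x) * ennreal (g (p z)))"
    proof (intro SUP_least)
      fix m x
      have "(\<Sum>z\<in>U. ennreal (cs m z x) * ennreal (g (p z))) \<le> (\<Sum>z\<in>U. ennreal (c z x) * ennreal (g (p z)))"
        by (intro sum_mono mult_right_mono ennreal_leI) (simp_all add: cs_def)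
      also have "\<dots> \<le> (SUP x. \<Sum>z\<in>U. ennreal (c z x) * ennreal (g (p z)))"
        by (rule SUP_upper) simp
      finally show "(\<Sum>z\<in>U. ennreal (cs m z x) * ennreal (g (p z))) \<le> \<dots>" .
    qed
    then show "(SUP m. SUP x. \<Sum>z\<in>U. ennreal (cs m z x) * ennreal (g (p z))) < \<infinity>"
      using sup by (rule order.strict_trans1)
  qed (use c sup in auto)
qed

end

section \<open>Discretising a kernel\<close>

lemma partition_of_unity_compact:
  fixes K :: "'a::euclidean_space set"
  assumes K: "compact K" and r: "0 < r"
  obtains U :: "'a set" and \<psi> :: "'a \<Rightarrow> 'a \<Rightarrow> real"
  where "finite U" "U \<subseteq> K" "\<And>z. continuous_on UNIV (\<psi> z)" "\<And>z y. 0 \<le> \<psi> z y"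
    "\<And>z y. \<psi> z y \<noteq> 0 \<Longrightarrow> dist y z < r" "\<And>y. (\<Sum>z\<in>U. \<psi> z y) \<le> 1"
    "\<And>y. y \<in> K \<Longrightarrow> (\<Sum>z\<in>U. \<psi> z y) = 1"
proof -
  obtain U where U: "U \<subseteq> K" "finite U" and cover: "K \<subseteq> (\<Union>z\<in>U. ball z r)"
    using compactE_image[OF K, of K "\<lambda>z. ball z r"] r by force
  define \<phi> :: "'a \<Rightarrow> 'a \<Rightarrow> real" where "\<phi> z y = max 0 (r - dist y z)" for z y
  define \<Phi> where "\<Phi> y = (\<Sum>z\<in>U. \<phi> z y)" for y
  have \<phi>_continuous: "continuous_on UNIV (\<phi> z)" for z
    unfolding \<phi>_def by (intro continuous_intros)
  have \<Phi>_continuous: "continuous_on UNIV \<Phi>"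
    unfolding \<Phi>_def by (intro continuous_intros \<phi>_continuous)
  have \<Phi>_nonneg: "0 \<le> \<Phi> y" for y
    unfolding \<Phi>_def \<phi>_def by (intro sum_nonneg) simp
  have \<Phi>_pos: "0 < \<Phi> y" if y: "y \<in> K" for y
  proof -
    obtain z where z: "z \<in> U" "y \<in> ball z r" using cover y by blast
    then have "0 < \<phi> z y" unfolding \<phi>_def by (simp add: dist_commute)
    also have "\<phi> z y \<le> \<Phi> y"
      unfolding \<Phi>_def using z(1) U(2) by (intro member_le_sum) (auto simp: \<phi>_def)
    finally show ?thesis .
  qed
  obtain \<delta> where \<delta>: "0 < \<delta>" "\<And>y. y \<in> K \<Longrightarrow> \<delta> \<le> \<Phi> y"
  proof (cases "K = {}")
    case True
    then show ?thesis using that[of 1] by auto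
  next
    case False
    obtain y0 where "y0 \<in> K" "\<forall>y\<in>K. \<Phi> y0 \<le> \<Phi> y"
      using continuous_attains_inf[OF K False continuous_on_subset[OF \<Phi>_continuous]] by auto
    then show ?thesis using that[of "\<Phi> y0"] \<Phi>_pos by auto
  qed
  define \<psi> :: "'a \<Rightarrow> 'a \<Rightarrow> real" where "\<psi> z y = \<phi> z y / max \<delta> (\<Phi> y)" for z y
  have sum_\<psi>: "(\<Sum>z\<in>U. \<psi> z y) = \<Phi> y / max \<delta> (\<Phi> y)" for y
    unfolding \<psi>_def \<Phi>_def by (simp add: sum_divide_distrib)
  show ?thesis
  proof (rule that[OF U(2,1)])
    show "continuous_on UNIV (\<psi> z)" for z
      unfolding \<psi>_def using \<delta>(1) by (intro continuous_intros \<phi>_continuous \<Phi>_continuous) auto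
    show "0 \<le> \<psi> z y" for z y
      unfolding \<psi>_def \<phi>_def using \<delta>(1) by simp
    show "dist y z < r" if "\<psi> z y \<noteq> 0" for z y
      using that unfolding \<psi>_def \<phi>_def by (auto simp: max_def split: if_splits)
    show "(\<Sum>z\<in>U. \<psi> z y) \<le> 1" for y
      unfolding sum_\<psi> using \<delta>(1) \<Phi>_nonneg[of y] by (simp add: divide_le_eq_1 max_def)
    show "(\<Sum>z\<in>U. \<psi> z y) = 1" if "y \<in> K" for y
      unfolding sum_\<psi> using \<delta>(2)[OF that] \<Phi>_pos[OF that] by (simp add: max_def)
  qed
qed

lemma abs_diff_partition_sum_le:
  fixes f :: "'a::metric_space \<Rightarrow> real"
  assumes "finite U" "\<And>z. z \<in> U \<Longrightarrow> 0 \<le> \<psi> z" "(\<Sum>z\<in>U. \<psi> z) \<le> 1"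
    and "f y \<noteq> 0 \<Longrightarrow> (\<Sum>z\<in>U. \<psi> z) = 1"
    and "\<And>z. z \<in> U \<Longrightarrow> \<psi> z \<noteq> 0 \<Longrightarrow> dist y (q z) < d" "0 < d"
    and modulus: "\<And>y'. dist y y' < d \<Longrightarrow> \<bar>f y - f y'\<bar> \<le> e"
  shows "\<bar>f y - (\<Sum>z\<in>U. f (q z) * \<psi> z)\<bar> \<le> e"
proof -
  have "0 \<le> e" using modulus[of y] \<open>0 < d\<close> by simp
  have "f y = (\<Sum>z\<in>U. f y * \<psi> z)"
    using assms(4) by (cases "f y = 0") (simp_all add: sum_distrib_left[symmetric])
  moreover have "(\<Sum>z\<in>U. (f y - f (q z)) * \<psi> z) = (\<Sum>z\<in>U. f y * \<psi> z) - (\<Sum>z\<in>U. f (q z) * \<psi> z)"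
    by (simp add: sum_subtractf left_diff_distrib)
  ultimately have "\<bar>f y - (\<Sum>z\<in>U. f (q z) * \<psi> z)\<bar> = \<bar>\<Sum>z\<in>U. (f y - f (q z)) * \<psi> z\<bar>"
    by simp
  also have "\<dots> \<le> (\<Sum>z\<in>U. \<bar>f y - f (q z)\<bar> * \<psi> z)"
    using sum_abs[of "\<lambda>z. (f y - f (q z)) * \<psi> z" U] assms(2) by (simp add: abs_mult)
  also have "\<dots> \<le> (\<Sum>z\<in>U. e * \<psi> z)"
    using assms(2,5) modulus by (intro sum_mono) (metis mult_eq_0_iff mult_right_mono order.refl)
  also have "\<dots> \<le> e"
    using assms(3) \<open>0 \<le> e\<close> by (simp add: sum_distrib_left[symmetric] mult_left_le)
  finally show ?thesis .
qed

lemma nn_integral_partition_weights_le: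
  fixes M :: "'a::euclidean_space measure" and g :: "'a \<Rightarrow> real"
  assumes M: "radon0 M" and g: "g \<in> borel_measurable borel" and U: "finite U"
    and \<psi>: "\<And>z. z \<in> U \<Longrightarrow> Cc0 (\<psi> z)" "\<And>z y. 0 \<le> \<psi> z y" "\<And>y. (\<Sum>z\<in>U. \<psi> z y) \<le> 1"
    and g_min: "\<And>z y. z \<in> U \<Longrightarrow> \<psi> z y \<noteq> 0 \<Longrightarrow> g (q z) \<le> g y"
  shows "(\<Sum>z\<in>U. ennreal (integral\<^sup>L M (\<psi> z)) * ennreal (g (q z))) \<le> (\<integral>\<^sup>+ y. ennreal (g y) \<partial>M)"
proof -
  have \<psi>_measurable: "\<psi> z \<in> borel_measurable M" if "z \<in> U" for z
    using measurable_radon0[OF M Cc0_borel_measurable[OF \<psi>(1)[OF that]]] .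
  have "(\<Sum>z\<in>U. ennreal (integral\<^sup>L M (\<psi> z)) * ennreal (g (q z)))
      = (\<Sum>z\<in>U. \<integral>\<^sup>+ y. ennreal (\<psi> z y) * ennreal (g (q z)) \<partial>M)"
    using \<psi>_measurable nn_integral_Cc0_eq_integral[OF M \<psi>(1) \<psi>(2)]
    by (intro sum.cong refl) (simp add: nn_integral_multc)
  also have "\<dots> \<le> (\<Sum>z\<in>U. \<integral>\<^sup>+ y. ennreal (\<psi> z y) * ennreal (g y) \<partial>M)"
    using g_min by (intro sum_mono nn_integral_mono) (metis ennreal_leI mult_left_mono mult_zero_left
        ennreal_0 order.refl zero_le)
  also have "\<dots> = (\<integral>\<^sup>+ y. (\<Sum>z\<in>U. ennreal (\<psi> z y)) * ennreal (g y) \<partial>M)"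
    using \<psi>_measurable measurable_radon0[OF M g]
    by (subst nn_integral_sum[symmetric]) (auto simp: sum_distrib_right)
  also have "\<dots> \<le> (\<integral>\<^sup>+ y. ennreal (g y) \<partial>M)"
  proof (rule nn_integral_mono)
    fix y
    have "(\<Sum>z\<in>U. ennreal (\<psi> z y)) \<le> 1"
      using \<psi>(2,3) by simp
    then show "(\<Sum>z\<in>U. ennreal (\<psi> z y)) * ennreal (g y) \<le> ennreal (g y)"
      using mult_right_mono[of _ 1 "ennreal (g y)"] by simp
  qed
  finally show ?thesis .
qed

lemma partition_mass_outside_ball_le:
  fixes M :: "'a::euclidean_space measure"
  assumes M: "radon0 M" and U: "finite U"
    and \<psi>: "\<And>z. z \<in> U \<Longrightarrow> Cc0 (\<psi> z)" "\<And>z y. 0 \<le> \<psi> z y" "\<And>y. (\<Sum>z\<in>U. \<psi> z y) \<le> 1"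
    and near: "\<And>z y. z \<in> U \<Longrightarrow> \<psi> z y \<noteq> 0 \<Longrightarrow> dist y (q z) \<le> s"
  shows "(\<Sum>z\<in>{z\<in>U. q z \<in> {y. norm y > R}}. ennreal (integral\<^sup>L M (\<psi> z)))
    \<le> emeasure M {y. norm y > R - s}"
proof -
  define V where "V = {z\<in>U. q z \<in> {y. norm y > R}}"
  have V: "V \<subseteq> U" "finite V" using U by (auto simp: V_def)
  have \<psi>_measurable: "\<psi> z \<in> borel_measurable M" if "z \<in> U" for z
    using measurable_radon0[OF M Cc0_borel_measurable[OF \<psi>(1)[OF that]]] .
  have "(\<Sum>z\<in>V. ennreal (integral\<^sup>L M (\<psi> z))) = (\<Sum>z\<in>V. \<integral>\<^sup>+ y. ennreal (\<psi> z y) \<partial>M)"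
    using V(1) nn_integral_Cc0_eq_integral[OF M \<psi>(1) \<psi>(2)] by (intro sum.cong) auto
  also have "\<dots> = (\<integral>\<^sup>+ y. (\<Sum>z\<in>V. ennreal (\<psi> z y)) \<partial>M)"
    using V(1) \<psi>_measurable \<psi>(2) by (intro nn_integral_sum[symmetric]) auto
  also have "\<dots> \<le> (\<integral>\<^sup>+ y. indicator {y. norm y > R - s} y \<partial>M)"
  proof (rule nn_integral_mono)
    fix y
    show "(\<Sum>z\<in>V. ennreal (\<psi> z y)) \<le> indicator {y. norm y > R - s} y"
    proof (cases "norm y > R - s")
      case True
      have "(\<Sum>z\<in>V. \<psi> z y) \<le> (\<Sum>z\<in>U. \<psi> z y)"
        using V \<psi>(2) U by (intro sum_mono2) auto
      with \<psi>(3)[of y] True show ?thesis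
        using \<psi>(2) by simp
    next
      case False
      have "\<psi> z y = 0" if "z \<in> V" for z
      proof (rule ccontr)
        assume "\<psi> z y \<noteq> 0"
        then have "dist y (q z) \<le> s" using near V(1) that by blast
        moreover have "norm (q z) > R" using that by (simp add: V_def)
        ultimately have "norm y > R - s"
          using norm_triangle_ineq3[of "q z" y] by (simp add: dist_norm norm_minus_commute)
        with False show False by simp
      qed
      then show ?thesis by simp
    qed
  qed
  also have "\<dots> = emeasure M {y. norm y > R - s}"
    using M by (simp add: radon0_def)
  finally show ?thesis unfolding V_def .
qed

definition annulus :: "nat \<Rightarrow> 'a::real_normed_vector set" where
  "annulus n = {y. 1 / (real n + 1) \<le> norm y \<and> norm y \<le> real n + 1}"

definition mesh :: "nat \<Rightarrow> real" where
  "mesh n = 1 / (2 * (real n + 1))"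

lemma mesh_pos: "0 < mesh n"
  by (simp add: mesh_def)

lemma two_mesh: "2 * mesh n = 1 / (real n + 1)"
  by (simp add: mesh_def field_simps)

lemma eventually_mesh_less: "0 < d \<Longrightarrow> eventually (\<lambda>n. 2 * mesh n < d) sequentially"
proof -
  assume "0 < d"
  have "(\<lambda>n. 2 * mesh n) \<longlonglongrightarrow> 0"
    unfolding two_mesh using LIMSEQ_Suc[OF lim_const_over_n[of 1]] by (simp add: add.commute)
  then show ?thesis
    using \<open>0 < d\<close> by (rule order_tendstoD(2))
qed

lemma eventually_subset_annulus:
  fixes K :: "'a::euclidean_space set"
  assumes "compact K" "K \<subseteq> - {0}"
  shows "eventually (\<lambda>n. K \<subseteq> annulus n) sequentially"
proof -
  obtain a R where a: "0 < a" and K: "\<And>y. y \<in> K \<Longrightarrow> a \<le> norm y \<and> norm y \<le> R"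
    using compact_subset_annulus[OF assms] by blast
  show ?thesis
  proof (rule eventually_sequentiallyI)
    fix n
    assume "nat \<lceil>max (1 / a) R\<rceil> \<le> n"
    then have "1 / a \<le> real n + 1" "R \<le> real n + 1" by linarith+
    then have "1 / (real n + 1) \<le> a" using a by (simp add: field_simps)
    then show "K \<subseteq> annulus n"
      using K \<open>R \<le> real n + 1\<close> by (force simp: annulus_def)
  qed
qed

(* \<psi> n is a partition of unity on annulus n whose bumps \<psi> n z are concentrated near the
   atoms pt n z; a kernel \<mu> is approximated by moving the mass weight \<mu> n z x that \<mu> x
   gives to \<psi> n z into the atom pt n z. *)
locale kernel_discretisation =
  fixes U :: "nat \<Rightarrow> 'a::euclidean_space set" and \<psi> :: "nat \<Rightarrow> 'a \<Rightarrow> 'a \<Rightarrow> real"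
    and pt :: "nat \<Rightarrow> 'a \<Rightarrow> 'a"
  assumes finite_U: "finite (U n)"
    and Cc0_\<psi>: "z \<in> U n \<Longrightarrow> Cc0 (\<psi> n z)"
    and \<psi>_nonneg: "0 \<le> \<psi> n z y"
    and sum_\<psi>_le_1: "(\<Sum>z\<in>U n. \<psi> n z y) \<le> 1"
    and sum_\<psi>_eq_1: "y \<in> annulus n \<Longrightarrow> (\<Sum>z\<in>U n. \<psi> n z y) = 1"
    and dist_pt_less: "z \<in> U n \<Longrightarrow> \<psi> n z y \<noteq> 0 \<Longrightarrow> dist y (pt n z) < 2 * mesh n"
    and pt_nonzero: "z \<in> U n \<Longrightarrow> pt n z \<noteq> 0"
begin

lemma tendsto_partition_integral:
  assumes M: "radon0 M" and f: "Cc0 f"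
  shows "(\<lambda>n. \<Sum>z\<in>U n. integral\<^sup>L M (\<psi> n z) * f (pt n z)) \<longlonglongrightarrow> integral\<^sup>L M f"
proof (rule tendstoI)
  fix e :: real
  assume "0 < e"
  obtain L where L: "compact L" "L \<subseteq> - {0}"
    and modulus: "\<And>e. 0 < e \<Longrightarrow> \<exists>d>0. \<forall>y y'. dist y y' < d \<longrightarrow> \<bar>f y - f y'\<bar> \<le> e * indicator L y"
    using Cc0_modulus_of_continuity[OF f] by blast
  obtain K where K: "compact K" "K \<subseteq> - {0}" "\<And>y. y \<notin> K \<Longrightarrow> f y = 0"
    using f unfolding Cc0_def by blast
  have L_sets: "L \<in> sets M" and L_finite: "emeasure M L < \<infinity>"
    using M L by (auto simp: radon0_def borel_compact)
  define \<epsilon> where "\<epsilon> = e / (measure M L + 1)"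
  have "0 < \<epsilon>" "\<epsilon> * measure M L < e"
    using \<open>0 < e\<close> measure_nonneg[of M L] by (auto simp: \<epsilon>_def field_simps add_pos_nonneg)
  then obtain d where d: "0 < d" "\<And>y y'. dist y y' < d \<Longrightarrow> \<bar>f y - f y'\<bar> \<le> \<epsilon> * indicator L y"
    using modulus by blast
  have f_integrable: "integrable M f" by (rule integrable_Cc0[OF M f])
  have sum_integrable: "integrable M (\<lambda>y. \<Sum>z\<in>U n. f (pt n z) * \<psi> n z y)" for n
    using integrable_Cc0[OF M Cc0_\<psi>] by auto
  have close: "dist (\<Sum>z\<in>U n. integral\<^sup>L M (\<psi> n z) * f (pt n z)) (integral\<^sup>L M f) < e"
    if "2 * mesh n < d" "K \<subseteq> annulus n" for n
  proof -
    have pointwise: "\<bar>f y - (\<Sum>z\<in>U n. f (pt n z) * \<psi> n z y)\<bar> \<le> \<epsilon> * indicator L y" for y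
    proof (rule abs_diff_partition_sum_le[OF finite_U \<psi>_nonneg sum_\<psi>_le_1 _ _ d(1) d(2)])
      show "(\<Sum>z\<in>U n. \<psi> n z y) = 1" if "f y \<noteq> 0"
        using that K(3) \<open>K \<subseteq> annulus n\<close> by (intro sum_\<psi>_eq_1) blast
      show "dist y (pt n z) < d" if "z \<in> U n" "\<psi> n z y \<noteq> 0" for z
        using dist_pt_less[OF that] \<open>2 * mesh n < d\<close> by simp
    qed
    have "(\<Sum>z\<in>U n. integral\<^sup>L M (\<psi> n z) * f (pt n z))
        = integral\<^sup>L M (\<lambda>y. \<Sum>z\<in>U n. f (pt n z) * \<psi> n z y)"
      using integrable_Cc0[OF M Cc0_\<psi>] by (simp add: integral_sum mult.commute)
    then have "dist (\<Sum>z\<in>U n. integral\<^sup>L M (\<psi> n z) * f (pt n z)) (integral\<^sup>L M f) \<le> \<epsilon> * measure M L"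
      using abs_integral_diff_le_indicator[OF f_integrable sum_integrable L_sets L_finite pointwise]
      by (simp add: dist_real_def abs_minus_commute)
    with \<open>\<epsilon> * measure M L < e\<close> show ?thesis by simp
  qed
  show "eventually (\<lambda>n. dist (\<Sum>z\<in>U n. integral\<^sup>L M (\<psi> n z) * f (pt n z)) (integral\<^sup>L M f) < e) sequentially"
    using eventually_mesh_less[OF d(1)] eventually_subset_annulus[OF K(1,2)]
    by eventually_elim (rule close)
qed

definition weight :: "('a \<Rightarrow> 'a measure) \<Rightarrow> nat \<Rightarrow> 'a \<Rightarrow> 'a \<Rightarrow> real" where
  "weight \<mu> n z x = integral\<^sup>L (\<mu> x) (\<psi> n z)"

lemma weight_nonneg: "0 \<le> weight \<mu> n z x"
  unfolding weight_def by (rule Bochner_Integration.integral_nonneg) (rule \<psi>_nonneg)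

lemma weight_borel_measurable:
  assumes "\<mu> \<in> Kg g" "z \<in> U n"
  shows "weight \<mu> n z \<in> borel_measurable borel"
  using assms Cc0_\<psi> unfolding Kg_def weight_def by blast

lemma SUP_sum_weights_le:
  assumes \<mu>: "\<mu> \<in> Kg g" and g: "g \<in> borel_measurable borel"
    and g_min: "\<And>n z y. z \<in> U n \<Longrightarrow> \<psi> n z y \<noteq> 0 \<Longrightarrow> g (pt n z) \<le> g y"
  shows "(SUP x. \<Sum>z\<in>U n. ennreal (weight \<mu> n z x) * ennreal (g (pt n z)))
    \<le> (SUP x. \<integral>\<^sup>+ y. ennreal (g y) \<partial>\<mu> x)"
proof (rule SUP_mono')
  fix x
  have "radon0 (\<mu> x)" using \<mu> by (simp add: Kg_def)
  then show "(\<Sum>z\<in>U n. ennreal (weight \<mu> n z x) * ennreal (g (pt n z))) \<le> (\<integral>\<^sup>+ y. ennreal (g y) \<partial>\<mu> x)"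
    unfolding weight_def using g finite_U Cc0_\<psi> \<psi>_nonneg sum_\<psi>_le_1 g_min
    by (rule nn_integral_partition_weights_le)
qed

lemma emeasure_outside_ball_le:
  assumes "radon0 (\<mu> x)"
  shows "emeasure (discrete_kernel (U n) (pt n) (weight \<mu> n) x) {y. norm y > R}
    \<le> emeasure (\<mu> x) {y. norm y > R - 1}"
proof -
  have "{y::'a. norm y > R} \<in> sets borel" by measurable
  then have "emeasure (discrete_kernel (U n) (pt n) (weight \<mu> n) x) {y. norm y > R}
      = (\<Sum>z\<in>{z\<in>U n. pt n z \<in> {y. norm y > R}}. ennreal (integral\<^sup>L (\<mu> x) (\<psi> n z)))"
    by (simp add: emeasure_discrete_kernel[OF finite_U] weight_def)
  also have "\<dots> \<le> emeasure (\<mu> x) {y. norm y > R - 1}"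
  proof (rule partition_mass_outside_ball_le[OF assms finite_U Cc0_\<psi> \<psi>_nonneg sum_\<psi>_le_1])
    have "1 / (real n + 1) \<le> 1" by (simp add: field_simps)
    then show "dist y (pt n z) \<le> 1" if "z \<in> U n" "\<psi> n z y \<noteq> 0" for z y
      using dist_pt_less[OF that] unfolding two_mesh by linarith
  qed
  finally show ?thesis .
qed

lemma tails_discretisation:
  assumes \<mu>: "\<mu> \<in> Kg g" and K: "compact K"
  shows "((\<lambda>R. SUP n. SUP x\<in>K. emeasure (discrete_kernel (U n) (pt n) (weight \<mu> n) x) {y. norm y > R})
    \<longlongrightarrow> 0) at_top"
proof -
  have "((\<lambda>R. SUP x\<in>K. emeasure (\<mu> x) {y. norm y > R}) \<longlongrightarrow> 0) at_top"
    using \<mu> K by (simp add: Kg_def)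
  moreover have "filterlim (\<lambda>R::real. R - 1) at_top at_top"
    using filterlim_tendsto_add_at_top[OF tendsto_const[of "-1"] filterlim_ident] by simp
  ultimately have lim: "((\<lambda>R. SUP x\<in>K. emeasure (\<mu> x) {y. norm y > R - 1}) \<longlongrightarrow> 0) at_top"
    by (rule filterlim_compose)
  have le: "(SUP n. SUP x\<in>K. emeasure (discrete_kernel (U n) (pt n) (weight \<mu> n) x) {y. norm y > R})
      \<le> (SUP x\<in>K. emeasure (\<mu> x) {y. norm y > R - 1})" for R
  proof (intro SUP_least)
    fix n x
    assume "x \<in> K"
    have "radon0 (\<mu> x)" using \<mu> by (simp add: Kg_def)
    then have "emeasure (discrete_kernel (U n) (pt n) (weight \<mu> n) x) {y. norm y > R}
        \<le> emeasure (\<mu> x) {y. norm y > R - 1}"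
      by (rule emeasure_outside_ball_le)
    also have "\<dots> \<le> (SUP x\<in>K. emeasure (\<mu> x) {y. norm y > R - 1})"
      using \<open>x \<in> K\<close> by (rule SUP_upper)
    finally show "emeasure (discrete_kernel (U n) (pt n) (weight \<mu> n) x) {y. norm y > R} \<le> \<dots>" .
  qed
  show ?thesis
    by (rule tendsto_sandwich[OF _ _ tendsto_const lim]) (auto intro!: always_eventually le)
qed

lemma bp_conv_discretisation:
  assumes \<mu>: "\<mu> \<in> Kg g" and g: "g \<in> borel_measurable borel"
    and g_min: "\<And>n z y. z \<in> U n \<Longrightarrow> \<psi> n z y \<noteq> 0 \<Longrightarrow> g (pt n z) \<le> g y"
  shows "bp_conv g (\<lambda>n. discrete_kernel (U n) (pt n) (weight \<mu> n)) \<mu>"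
proof -
  have radon: "radon0 (\<mu> x)" for x
    using \<mu> by (simp add: Kg_def)
  have sup_\<mu>: "(SUP x. \<integral>\<^sup>+ y. ennreal (g y) \<partial>\<mu> x) < \<infinity>"
    using \<mu> by (simp add: Kg_def)
  note sup_weights = SUP_sum_weights_le[OF \<mu> g g_min]
  show ?thesis
    unfolding bp_conv_def vague_conv_def
  proof (intro conjI allI impI)
    show "discrete_kernel (U n) (pt n) (weight \<mu> n) \<in> Kg g" for n
      using weight_borel_measurable[OF \<mu>] weight_nonneg sup_weights[of n] sup_\<mu>
      by (intro discrete_kernel_in_Kg[OF finite_U pt_nonzero g]) auto
    show "radon0 (\<mu> x)" for x by (rule radon)
    have "(SUP n. SUP x. \<integral>\<^sup>+ y. ennreal (g y) \<partial>discrete_kernel (U n) (pt n) (weight \<mu> n) x)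
        = (SUP n. SUP x. \<Sum>z\<in>U n. ennreal (weight \<mu> n z x) * ennreal (g (pt n z)))"
      using g by (simp add: nn_integral_discrete_kernel[OF finite_U])
    also have "\<dots> \<le> (SUP x. \<integral>\<^sup>+ y. ennreal (g y) \<partial>\<mu> x)"
      by (intro SUP_least sup_weights)
    also have "\<dots> < \<infinity>" by (fact sup_\<mu>)
    finally show "(SUP n. SUP x. \<integral>\<^sup>+ y. ennreal (g y) \<partial>discrete_kernel (U n) (pt n) (weight \<mu> n) x) < \<infinity>" .
  next
    fix x and f :: "'a \<Rightarrow> real"
    assume f: "Cc0 f"
    have "integral\<^sup>L (discrete_kernel (U n) (pt n) (weight \<mu> n) x) f
        = (\<Sum>z\<in>U n. integral\<^sup>L (\<mu> x) (\<psi> n z) * f (pt n z))" for n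
      unfolding integral_discrete_kernel[OF finite_U Cc0_borel_measurable[OF f] weight_nonneg]
      by (simp add: weight_def)
    then show "(\<lambda>n. integral\<^sup>L (discrete_kernel (U n) (pt n) (weight \<mu> n) x) f) \<longlonglongrightarrow> integral\<^sup>L (\<mu> x) f"
      using tendsto_partition_integral[OF radon[of x] f] by simp
  next
    show "((\<lambda>R. SUP n. SUP x\<in>K. emeasure (discrete_kernel (U n) (pt n) (weight \<mu> n) x) {y. norm y > R})
        \<longlongrightarrow> 0) at_top" if "compact K" for K
      using \<mu> that by (rule tails_discretisation)
  qed
qed

end

(* Taking pt z to minimise g on the ball around z is what keeps the g-moments of the
   approximations below those of the kernel (nn_integral_partition_weights_le). *)
lemma annulus_partition_with_minimisers:
  fixes g :: "'a::euclidean_space \<Rightarrow> real"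
  assumes g: "continuous_on (- {0}) g"
  obtains U :: "'a set" and \<psi> pt where "finite U" "\<And>z. z \<in> U \<Longrightarrow> Cc0 (\<psi> z)" "\<And>z y. 0 \<le> \<psi> z y"
    "\<And>y. (\<Sum>z\<in>U. \<psi> z y) \<le> 1" "\<And>y. y \<in> annulus n \<Longrightarrow> (\<Sum>z\<in>U. \<psi> z y) = 1"
    "\<And>z y. z \<in> U \<Longrightarrow> \<psi> z y \<noteq> 0 \<Longrightarrow> dist y (pt z) < 2 * mesh n"
    "\<And>z y. z \<in> U \<Longrightarrow> \<psi> z y \<noteq> 0 \<Longrightarrow> g (pt z) \<le> g y"
    "\<And>z. z \<in> U \<Longrightarrow> pt z \<noteq> 0"
proof -
  have "compact (annulus n :: 'a set)"
    unfolding annulus_def by (rule compact_annulus)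
  then obtain U and \<psi> :: "'a \<Rightarrow> 'a \<Rightarrow> real" where U: "finite U" "U \<subseteq> annulus n"
    and \<psi>: "\<And>z. continuous_on UNIV (\<psi> z)" "\<And>z y. 0 \<le> \<psi> z y"
      "\<And>z y. \<psi> z y \<noteq> 0 \<Longrightarrow> dist y z < mesh n" "\<And>y. (\<Sum>z\<in>U. \<psi> z y) \<le> 1"
      "\<And>y. y \<in> annulus n \<Longrightarrow> (\<Sum>z\<in>U. \<psi> z y) = 1"
    using partition_of_unity_compact[OF _ mesh_pos[of n]] by blast
  have cball_nonzero: "cball z (mesh n) \<subseteq> - {0}" if "z \<in> U" for z :: 'a
  proof
    fix y
    assume "y \<in> cball z (mesh n)"
    moreover have "2 * mesh n \<le> norm z"
      using U(2) that by (auto simp: annulus_def two_mesh)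
    ultimately have "mesh n \<le> norm y"
      using norm_triangle_ineq2[of z y] by (simp add: dist_norm norm_minus_commute)
    then show "y \<in> - {0}" using mesh_pos[of n] by auto
  qed
  have "\<exists>p\<in>cball z (mesh n). \<forall>w\<in>cball z (mesh n). g p \<le> g w" if "z \<in> U" for z :: 'a
  proof (rule continuous_attains_inf)
    show "cball z (mesh n) \<noteq> {}" using mesh_pos[of n] by simp
    show "continuous_on (cball z (mesh n)) g"
      using g cball_nonzero[OF that] by (rule continuous_on_subset)
  qed simp
  then have "\<forall>z\<in>U. \<exists>p. p \<in> cball z (mesh n) \<and> (\<forall>w\<in>cball z (mesh n). g p \<le> g w)"
    by blast
  then obtain pt where pt: "\<forall>z\<in>U. pt z \<in> cball z (mesh n) \<and> (\<forall>w\<in>cball z (mesh n). g (pt z) \<le> g w)"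
    by (auto dest: bchoice)
  have \<psi>_support: "y \<in> cball z (mesh n)" if "\<psi> z y \<noteq> 0" for z y
    using \<psi>(3)[OF that] by (simp add: dist_commute less_imp_le)
  show thesis
  proof (rule that[where U=U and \<psi>=\<psi> and pt=pt])
    show "Cc0 (\<psi> z)" if "z \<in> U" for z
      unfolding Cc0_def using \<psi>(1) cball_nonzero[OF that] \<psi>_support
      by (intro conjI exI[of _ "cball z (mesh n)"]) auto
    show "dist y (pt z) < 2 * mesh n" if "z \<in> U" "\<psi> z y \<noteq> 0" for z y
      using \<psi>(3)[OF that(2)] pt[rule_format, OF that(1), THEN conjunct1] dist_triangle[of y "pt z" z] by simp
    show "g (pt z) \<le> g y" if "z \<in> U" "\<psi> z y \<noteq> 0" for z y
      using pt[rule_format, OF that(1)] \<psi>_support[OF that(2)] by blast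
    show "pt z \<noteq> 0" if "z \<in> U" for z
      using pt[rule_format, OF that] cball_nonzero[OF that] by blast
    show "finite U" by (fact U(1))
    show "0 \<le> \<psi> z y" for z y by (fact \<psi>(2))
    show "(\<Sum>z\<in>U. \<psi> z y) \<le> 1" for y by (fact \<psi>(4))
    show "(\<Sum>z\<in>U. \<psi> z y) = 1" if "y \<in> annulus n" for y using that by (fact \<psi>(5))
  qed
qed

lemma kernel_discretisation_exists:
  fixes g :: "'a::euclidean_space \<Rightarrow> real"
  assumes "continuous_on (- {0}) g"
  obtains U \<psi> pt where "kernel_discretisation U \<psi> pt"
    "\<And>n z y. z \<in> U n \<Longrightarrow> \<psi> n z y \<noteq> 0 \<Longrightarrow> g (pt n z) \<le> g y"
proof -
  define P where "P n U \<psi> pt \<longleftrightarrow> finite U \<and> (\<forall>z\<in>U. Cc0 (\<psi> z)) \<and> (\<forall>z y. 0 \<le> \<psi> z y) \<and>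
      (\<forall>y. (\<Sum>z\<in>U. \<psi> z y) \<le> 1) \<and> (\<forall>y\<in>annulus n. (\<Sum>z\<in>U. \<psi> z y) = 1) \<and>
      (\<forall>z\<in>U. \<forall>y. \<psi> z y \<noteq> 0 \<longrightarrow> dist y (pt z) < 2 * mesh n \<and> g (pt z) \<le> g y) \<and>
      (\<forall>z\<in>U. pt z \<noteq> 0)"
    for n U and \<psi> :: "'a \<Rightarrow> 'a \<Rightarrow> real" and pt :: "'a \<Rightarrow> 'a"
  have "\<exists>U \<psi> pt. P n U \<psi> pt" for n
  proof -
    obtain U :: "'a set" and \<psi> :: "'a \<Rightarrow> 'a \<Rightarrow> real" and pt
      where "finite U" "\<And>z. z \<in> U \<Longrightarrow> Cc0 (\<psi> z)" "\<And>z y. 0 \<le> \<psi> z y"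
      "\<And>y. (\<Sum>z\<in>U. \<psi> z y) \<le> 1" "\<And>y. y \<in> annulus n \<Longrightarrow> (\<Sum>z\<in>U. \<psi> z y) = 1"
      "\<And>z y. z \<in> U \<Longrightarrow> \<psi> z y \<noteq> 0 \<Longrightarrow> dist y (pt z) < 2 * mesh n"
      "\<And>z y. z \<in> U \<Longrightarrow> \<psi> z y \<noteq> 0 \<Longrightarrow> g (pt z) \<le> g y"
      "\<And>z. z \<in> U \<Longrightarrow> pt z \<noteq> 0"
      using annulus_partition_with_minimisers[OF assms, where n=n] by blast
    then have "P n U \<psi> pt" by (simp add: P_def)
    then show ?thesis by blast
  qed
  then obtain U \<psi> pt where "\<And>n. P n (U n) (\<psi> n) (pt n)"
    by metis
  then have "kernel_discretisation U \<psi> pt"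
    by unfold_locales (simp_all add: P_def)
  moreover have "g (pt n z) \<le> g y" if "z \<in> U n" "\<psi> n z y \<noteq> 0" for n z y
    using \<open>P n (U n) (\<psi> n) (pt n)\<close> that by (simp add: P_def)
  ultimately show thesis by (rule that)
qed

context bp_closed_superset
begin

lemma Kg_subset:
  assumes g: "continuous_on (- {0}) g"
  shows "Kg g \<subseteq> S"
proof
  fix \<mu>
  assume \<mu>: "\<mu> \<in> Kg g"
  obtain U \<psi> pt where discretisation: "kernel_discretisation U \<psi> pt"
    and g_min: "\<And>n z y. z \<in> U n \<Longrightarrow> \<psi> n z y \<noteq> 0 \<Longrightarrow> g (pt n z) \<le> g y"
    using kernel_discretisation_exists[OF g] by blast
  interpret kernel_discretisation U \<psi> pt by (fact discretisation)
  have "(SUP x. \<integral>\<^sup>+ y. ennreal (g y) \<partial>\<mu> x) < \<infinity>"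
    using \<mu> by (simp add: Kg_def)
  then have "discrete_kernel (U n) (pt n) (weight \<mu> n) \<in> S" for n
    using weight_borel_measurable[OF \<mu>] weight_nonneg SUP_sum_weights_le[OF \<mu> g_borel g_min, of n]
    by (intro discrete_kernel_mem[OF finite_U pt_nonzero]) auto
  moreover have "bp_conv g (\<lambda>n. discrete_kernel (U n) (pt n) (weight \<mu> n)) \<mu>"
    using \<mu> g_borel g_min by (rule bp_conv_discretisation)
  ultimately show "\<mu> \<in> S"
    using \<mu> by (rule mem_if_bp_conv)
qed

end

theorem theoremA5:
  fixes g :: "'a::euclidean_space \<Rightarrow> real"
  assumes "continuous_on (- {0}) g"
    and "\<And>y. y \<noteq> 0 \<Longrightarrow> g y \<ge> 0"
  shows "bp_closure g (Cc_kernels \<inter> Kg g) = Kg g"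
proof
  show "bp_closure g (Cc_kernels \<inter> Kg g) \<subseteq> Kg g"
    unfolding bp_closure_def by (rule Inter_lower) (auto simp: bp_closed_def)
next
  have g_borel: "g \<in> borel_measurable borel"
    using assms(1) by (intro borel_measurable_continuous_countable_exceptions[of "{0}"]) auto
  show "Kg g \<subseteq> bp_closure g (Cc_kernels \<inter> Kg g)"
    unfolding bp_closure_def
  proof (rule Inter_greatest)
    fix S
    assume "S \<in> {S. S \<subseteq> Kg g \<and> Cc_kernels \<inter> Kg g \<subseteq> S \<and> bp_closed g S}"
    then interpret bp_closed_superset g S
      using g_borel by unfold_locales auto
    show "Kg g \<subseteq> S" using assms(1) by (rule Kg_subset)
  qed
qed

end
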